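(* Let $X$ be a Banach lattice with a bibasis, and let $D\subseteq X$ be a subset whose linear span is dense in $X$. Then there exists a u-frame $(x_j,f_j)_{j=1}^\infty$ of $X$ such that $x_j\in D$ for all $j\in\mathbb{N}$.
   Context: In a Banach lattice $X$, a sequence $(y_n)$ converges uniformly to $y$ (written $y_n\xrightarrow{u}y$) if there is a positive vector $w\in X$ (a regulator) such that for every $\varepsilon>0$ there is $N$ with $|y-y_n|\le\varepsilon w$ for all $n\ge N$. A sequence of pairs $(x_j,f_j)_{j=1}^\infty$ in $X\times X^*$ is a Schauder frame of $X$ if $x=\sum_{j=1}^\infty f_j(x)x_j$ in norm for all $x\in X$; it is a u-frame if moreover $\sum_{j=1}^n f_j(x)x_j\xrightarrow{u}x$ for every $x\in X$. A Schauder basis $(x_j)$ of $X$ with biorthogonal functionals $(x_j^* )$ is a bibasis if $\sum_{j=1}^n x_j^*(x)x_j\xrightarrow{u}x$ for every $x\in X$. *)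

theory Defs
  imports "HOL-Analysis.Analysis"
begin

definition labs :: "'a::{lattice, uminus} \<Rightarrow> 'a" where
  "labs x = sup x (- x)"

class banach_lattice = banach + ordered_real_vector + lattice +
  assumes lattice_norm: "sup x (- x) \<le> sup y (- y) \<Longrightarrow> norm x \<le> norm y"

definition u_conv :: "(nat \<Rightarrow> 'a::banach_lattice) \<Rightarrow> 'a \<Rightarrow> bool" where
  "u_conv y x \<longleftrightarrow> (\<exists>w. 0 \<le> w \<and>
     (\<forall>\<epsilon>>0. \<exists>N. \<forall>n\<ge>N. labs (x - y n) \<le> \<epsilon> *\<^sub>R w))"

text \<open>Schauder frame (indices start at 0): f j in the dual X*, and
  x = sum_j f j x x_j in norm.\<close>
definition schauder_frame :: "(nat \<Rightarrow> 'a::banach_lattice) \<Rightarrow> (nat \<Rightarrow> 'a \<Rightarrow> real) \<Rightarrow> bool" where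
  "schauder_frame xs f \<longleftrightarrow> (\<forall>j. bounded_linear (f j)) \<and>
     (\<forall>x. (\<lambda>n. \<Sum>j<n. f j x *\<^sub>R xs j) \<longlonglongrightarrow> x)"

definition u_frame :: "(nat \<Rightarrow> 'a::banach_lattice) \<Rightarrow> (nat \<Rightarrow> 'a \<Rightarrow> real) \<Rightarrow> bool" where
  "u_frame xs f \<longleftrightarrow> schauder_frame xs f \<and>
     (\<forall>x. u_conv (\<lambda>n. \<Sum>j<n. f j x *\<^sub>R xs j) x)"

definition schauder_basis :: "(nat \<Rightarrow> 'a::banach_lattice) \<Rightarrow> bool" where
  "schauder_basis e \<longleftrightarrow> (\<forall>x. \<exists>!a. (\<lambda>n. \<Sum>j<n. a j *\<^sub>R e j) \<longlonglongrightarrow> x)"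

text \<open>Bibasis: the partial sums of the basis expansion (coefficients are the
  biorthogonal functionals) also converge uniformly.\<close>
definition bibasis :: "(nat \<Rightarrow> 'a::banach_lattice) \<Rightarrow> bool" where
  "bibasis e \<longleftrightarrow> schauder_basis e \<and>
     (\<forall>x a. (\<lambda>n. \<Sum>j<n. a j *\<^sub>R e j) \<longlonglongrightarrow> x \<longrightarrow>
        u_conv (\<lambda>n. \<Sum>j<n. a j *\<^sub>R e j) x)"

end

theory Submission
  imports Defs "HOL-Library.Lattice_Algebras"
begin

text \<open>
  The coefficient functionals e_k^* of the bibasis are bounded, by Zabreiko's lemma applied to the
  countably subadditive norm x |-> sup_n ||P_n x|| built from the basis projections P_n. So one can
  pick v_k in span D so close to e_k that R y = sum_k e_k^*(y) (e_k - v_k) has norm at most 1/3; with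
  S = (I - R)^-1 every x equals sum_k e_k^*(S x) v_k. Writing v_k = sum_i a_ki d_ki with d_ki in D,
  the frame runs N_k times through the terms (a_ki / N_k) d_ki. A partial sum that stops inside
  block k differs from x by at most 2 |y - P_k y| + |y - P_(k+1) y| (where y = S x), which is
  uniformly small because e is a bibasis, plus a positive vector g_k of norm O(4^-k ||y||) once N_k
  is large. All g_k lie below 2^-k sum_j 2^j g_j, so one regulator serves every block.
\<close>

class vector_lattice = ordered_real_vector + lattice

subclass (in vector_lattice) lattice_ab_group_add ..

subclass (in banach_lattice) vector_lattice ..

lemma labs_ge: "x \<le> labs x" "- x \<le> labs x"
  for x :: "'a::vector_lattice"
  unfolding labs_def by auto

lemma labs_le_iff: "labs x \<le> y \<longleftrightarrow> x \<le> y \<and> - x \<le> y"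
  for x y :: "'a::vector_lattice"
  unfolding labs_def by simp

lemma labs_nonneg: "0 \<le> labs x"
  for x :: "'a::vector_lattice"
proof -
  have "x + - x \<le> labs x + labs x"
    by (intro add_mono labs_ge)
  then show ?thesis by simp
qed

lemma labs_of_nonneg: "0 \<le> x \<Longrightarrow> labs x = x"
  for x :: "'a::vector_lattice"
  unfolding labs_def by (simp add: sup_absorb1 order_trans[of "- x" 0 x])

lemma labs_labs [simp]: "labs (labs x) = labs x"
  for x :: "'a::vector_lattice"
  by (simp add: labs_of_nonneg labs_nonneg)

lemma labs_minus [simp]: "labs (- x) = labs x"
  for x :: "'a::vector_lattice"
  unfolding labs_def by (simp add: sup_commute)

lemma labs_triangle: "labs (x + y) \<le> labs x + labs y"
  for x y :: "'a::vector_lattice"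
  unfolding labs_le_iff
  using add_mono[OF labs_ge(1)[of x] labs_ge(1)[of y]] add_mono[OF labs_ge(2)[of x] labs_ge(2)[of y]]
  by (auto simp: algebra_simps)

lemma labs_diff_le: "labs (x - y) \<le> labs x + labs y"
  for x y :: "'a::vector_lattice"
  using labs_triangle[of x "- y"] by simp

lemma labs_scaleR_nonneg:
  fixes x :: "'a::vector_lattice"
  assumes "0 \<le> c"
  shows "labs (c *\<^sub>R x) = c *\<^sub>R labs x"
proof (rule antisym)
  show "labs (c *\<^sub>R x) \<le> c *\<^sub>R labs x"
    unfolding labs_le_iff using scaleR_left_mono[OF labs_ge(1) assms] scaleR_left_mono[OF labs_ge(2) assms]
    by auto
  show "c *\<^sub>R labs x \<le> labs (c *\<^sub>R x)"
  proof (cases "c = 0")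
    case False
    with assms have "0 < c" by simp
    have "labs x \<le> (1 / c) *\<^sub>R labs (c *\<^sub>R x)"
      unfolding labs_le_iff
      using scaleR_left_mono[OF labs_ge(1)[of "c *\<^sub>R x"], of "1 / c"]
        scaleR_left_mono[OF labs_ge(2)[of "c *\<^sub>R x"], of "1 / c"] \<open>0 < c\<close>
      by auto
    then have "c *\<^sub>R labs x \<le> c *\<^sub>R ((1 / c) *\<^sub>R labs (c *\<^sub>R x))"
      using scaleR_left_mono assms by blast
    then show ?thesis using \<open>0 < c\<close> by simp
  qed (simp add: labs_nonneg)
qed

lemma labs_scaleR: "labs (c *\<^sub>R x) = \<bar>c\<bar> *\<^sub>R labs x"
  for x :: "'a::vector_lattice"
proof (cases "0 \<le> c")
  case False
  have "labs (c *\<^sub>R x) = labs ((- c) *\<^sub>R x)"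
    by (metis labs_minus scaleR_minus_left)
  also have "\<dots> = (- c) *\<^sub>R labs x"
    using False by (intro labs_scaleR_nonneg) simp
  finally show ?thesis
    using False by simp
qed (simp add: labs_scaleR_nonneg)

lemma labs_sum: "labs (sum f A) \<le> (\<Sum>i\<in>A. labs (f i))"
  for f :: "'b \<Rightarrow> 'a::vector_lattice"
proof (induction A rule: infinite_finite_induct)
  case (insert i F)
  then show ?case
    using order_trans[OF labs_triangle add_left_mono[OF insert(3)]] by simp
qed (simp_all add: labs_def)

lemma labs_combination_le:
  fixes A A' E T W :: "'a::vector_lattice"
  assumes "\<bar>t\<bar> \<le> 1"
  shows "labs (A - T - t *\<^sub>R (A - A' - E) - W) \<le> 2 *\<^sub>R labs A + labs A' + (labs T + labs E + labs W)"
proof -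
  have diff3: "labs (x - y - z) \<le> labs x + labs y + labs z" for x y z :: 'a
    by (rule order_trans[OF labs_diff_le add_right_mono[OF labs_diff_le]])
  have "labs (t *\<^sub>R (A - A' - E)) = \<bar>t\<bar> *\<^sub>R labs (A - A' - E)"
    by (rule labs_scaleR)
  also have "\<dots> \<le> labs (A - A' - E)"
    using assms by (intro scaleR_left_le_one_le labs_nonneg)
  also have "\<dots> \<le> labs A + labs A' + labs E"
    by (rule diff3)
  finally have scaled: "labs (t *\<^sub>R (A - A' - E)) \<le> labs A + labs A' + labs E" .
  have "labs (A - T - t *\<^sub>R (A - A' - E) - W) \<le> labs (A - T) + labs (t *\<^sub>R (A - A' - E)) + labs W"
    by (rule diff3)
  also have "\<dots> \<le> (labs A + labs T) + (labs A + labs A' + labs E) + labs W"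
    by (intro add_mono labs_diff_le scaled order_refl)
  also have "\<dots> = 2 *\<^sub>R labs A + labs A' + (labs T + labs E + labs W)"
    by (simp add: scaleR_2 algebra_simps)
  finally show ?thesis .
qed

lemma norm_le_if_labs_le:
  fixes x :: "'a::banach_lattice"
  assumes "labs x \<le> w"
  shows "norm x \<le> norm w"
proof -
  have "labs w = w"
    using labs_nonneg[of x] assms by (intro labs_of_nonneg) (rule order_trans)
  with assms show ?thesis
    by (intro lattice_norm) (simp add: labs_def)
qed

lemma norm_labs [simp]: "norm (labs x) = norm x"
  for x :: "'a::banach_lattice"
proof -
  have "sup (labs x) (- labs x) = sup x (- x)"
    using labs_labs[of x] by (simp add: labs_def)
  then show ?thesis
    using lattice_norm[of "labs x" x] lattice_norm[of x "labs x"] by simp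
qed

lemma LIMSEQ_nonneg:
  fixes s :: "nat \<Rightarrow> 'a::banach_lattice"
  assumes "eventually (\<lambda>n. 0 \<le> s n) sequentially" and "s \<longlonglongrightarrow> l"
  shows "0 \<le> l"
proof -
  define m where "m = sup (- l) 0"
  have "eventually (\<lambda>n. norm m \<le> norm (s n - l)) sequentially"
    using assms(1)
  proof eventually_elim
    case (elim n)
    then have "- l \<le> labs (s n - l)"
      using order_trans[OF _ labs_ge(1)[of "s n - l"]] by simp
    then have "labs m \<le> labs (s n - l)"
      by (simp add: m_def labs_of_nonneg labs_nonneg)
    then show ?case
      using norm_le_if_labs_le by fastforce
  qed
  moreover have "(\<lambda>n. norm (s n - l)) \<longlonglongrightarrow> 0"
    using assms(2) by (simp add: LIM_zero_iff tendsto_norm_zero)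
  ultimately have "norm m \<le> 0"
    by (intro LIMSEQ_le_const[where X = "\<lambda>n. norm (s n - l)"]) (auto simp: eventually_sequentially)
  then have "- l \<le> 0"
    unfolding m_def by (metis norm_le_zero_iff sup.cobounded1)
  then show ?thesis by simp
qed

lemma le_suminf_nonneg:
  fixes g :: "nat \<Rightarrow> 'a::banach_lattice"
  assumes "\<And>n. 0 \<le> g n" and "summable g"
  shows "g n \<le> suminf g"
proof -
  have "eventually (\<lambda>m. 0 \<le> (\<Sum>i<m. g i) - g n) sequentially"
    unfolding eventually_sequentially
  proof (intro exI allI impI)
    fix m assume "Suc n \<le> m"
    then have "(\<Sum>i<m. g i) = g n + (\<Sum>i\<in>{..<m} - {n}. g i)"
      by (simp add: sum.remove)
    moreover have "0 \<le> (\<Sum>i\<in>{..<m} - {n}. g i)"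
      by (intro sum_nonneg assms(1))
    ultimately show "0 \<le> (\<Sum>i<m. g i) - g n" by simp
  qed
  moreover have "(\<lambda>m. (\<Sum>i<m. g i) - g n) \<longlonglongrightarrow> suminf g - g n"
    by (intro tendsto_diff summable_LIMSEQ assms tendsto_const)
  ultimately show ?thesis
    using LIMSEQ_nonneg by fastforce
qed

lemma u_conv_imp_LIMSEQ:
  fixes y :: "nat \<Rightarrow> 'a::banach_lattice"
  assumes "u_conv y x"
  shows "y \<longlonglongrightarrow> x"
proof -
  obtain w where w: "\<And>\<epsilon>. \<epsilon> > 0 \<Longrightarrow> \<exists>N. \<forall>n\<ge>N. labs (x - y n) \<le> \<epsilon> *\<^sub>R w"
    using assms unfolding u_conv_def by blast
  show ?thesis
  proof (rule LIMSEQ_I)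
    fix r :: real assume "0 < r"
    define \<epsilon> where "\<epsilon> = r / (norm w + 1)"
    have "\<epsilon> > 0" "\<epsilon> * norm w < r"
      using \<open>0 < r\<close> add_nonneg_pos[OF norm_ge_zero[of w], of 1]
      by (simp_all add: \<epsilon>_def divide_simps)
    then obtain N where N: "\<forall>n\<ge>N. labs (x - y n) \<le> \<epsilon> *\<^sub>R w"
      using w by blast
    have "norm (y n - x) < r" if "n \<ge> N" for n
      using norm_le_if_labs_le[OF N[rule_format, OF that]] \<open>\<epsilon> > 0\<close> \<open>\<epsilon> * norm w < r\<close>
      by (simp add: norm_minus_commute)
    then show "\<exists>N. \<forall>n\<ge>N. norm (y n - x) < r" by blast
  qed
qed

lemma nonneg_le_geometric_regulator:
  fixes g :: "nat \<Rightarrow> 'a::banach_lattice"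
  assumes nonneg: "\<And>K. 0 \<le> g K" and bound: "\<And>K. norm (g K) \<le> M * (1 / 4) ^ K"
  obtains w where "0 \<le> w" and "\<And>K. g K \<le> (1 / 2) ^ K *\<^sub>R w"
proof -
  have scaled_bound: "norm ((2 :: real) ^ K *\<^sub>R g K) \<le> M * (1 / 2) ^ K" for K
  proof -
    have "norm ((2 :: real) ^ K *\<^sub>R g K) \<le> 2 ^ K * (M * (1 / 4) ^ K)"
      using mult_left_mono[OF bound[of K], of "2 ^ K"] by simp
    also have "\<dots> = M * ((2 :: real) ^ K * (1 / 4) ^ K)"
      by (simp add: ac_simps)
    also have "\<dots> = M * (1 / 2) ^ K"
      by (simp add: power_mult_distrib[symmetric])
    finally show ?thesis .
  qed
  have "summable (\<lambda>K. M * (1 / 2 :: real) ^ K)"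
    by (intro summable_mult summable_geometric) simp
  then have "summable (\<lambda>K. (2 :: real) ^ K *\<^sub>R g K)"
    using scaled_bound by (rule summable_comparison_test')
  then have le_w: "(2 :: real) ^ K *\<^sub>R g K \<le> (\<Sum>K. (2 :: real) ^ K *\<^sub>R g K)" for K
    by (intro le_suminf_nonneg scaleR_nonneg_nonneg nonneg) simp_all
  show ?thesis
  proof
    show "0 \<le> (\<Sum>K. (2 :: real) ^ K *\<^sub>R g K)"
      using nonneg[of 0] le_w[of 0] by simp
    show "g K \<le> (1 / 2) ^ K *\<^sub>R (\<Sum>K. (2 :: real) ^ K *\<^sub>R g K)" for K
      using scaleR_left_mono[OF le_w[of K], of "(1 / 2) ^ K"]
      by (simp add: power_mult_distrib[symmetric])
  qed
qed

section \<open>Zabreiko's lemma\<close>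

locale countably_subadditive_seminorm =
  fixes p :: "'a::banach \<Rightarrow> real"
  assumes subadditive: "p (x + y) \<le> p x + p y"
    and homogeneous: "p (c *\<^sub>R x) = \<bar>c\<bar> * p x"
    and countably_subadditive: "u sums s \<Longrightarrow> summable (\<lambda>i. p (u i)) \<Longrightarrow> p s \<le> (\<Sum>i. p (u i))"
begin

lemma zero [simp]: "p 0 = 0"
  using homogeneous[of 0 0] by simp

lemma nonneg: "0 \<le> p x"
  using subadditive[of x "- x"] homogeneous[of "- 1" x] by simp

lemma diff: "p (x - y) \<le> p x + p y"
  using subadditive[of x "- y"] homogeneous[of "- 1" y] by simp

lemma sublevel_closure_contains_ball:
  "\<exists>m x0 r. 0 < r \<and> ball x0 r \<subseteq> closure {x. p x \<le> real m}"
proof (rule ccontr)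
  assume no_ball: "\<not> ?thesis"
  define G where "G = range (\<lambda>m::nat. closure {x. p x \<le> real m})"
  have "euclidean interior_of \<Union>G = {}"
  proof (rule Baire_category_alt)
    show "completely_metrizable_space (euclidean :: 'a topology) \<or>
      locally_compact_space (euclidean :: 'a topology) \<and> regular_space (euclidean :: 'a topology)"
      using completely_metrizable_space_euclidean by blast
    show "countable G"
      unfolding G_def by simp
    fix T assume "T \<in> G"
    then obtain m where T: "T = closure {x. p x \<le> real m}"
      unfolding G_def by blast
    have "interior T = {}"
    proof (rule ccontr)
      assume "interior T \<noteq> {}"
      then obtain z r where "0 < r" "ball z r \<subseteq> T"
        by (meson all_not_in_conv open_contains_ball open_interior interior_subset subset_trans)
      with T no_ball show False by blast
    qed
    then show "closedin euclidean T \<and> euclidean interior_of T = {}"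
      by (simp add: T interior_of_openin)
  qed
  moreover have "\<Union>G = UNIV"
  proof -
    have "x \<in> closure {y. p y \<le> real (nat \<lceil>p x\<rceil>)}" for x
      by (rule closure_subset[THEN subsetD]) (simp add: real_nat_ceiling_ge)
    then show ?thesis
      unfolding G_def by blast
  qed
  ultimately show False
    by (simp add: interior_of_openin)
qed

lemma approximation_near_zero:
  obtains r m where "0 < r"
    and "\<And>z \<delta>. norm z < r \<Longrightarrow> 0 < \<delta> \<Longrightarrow> \<exists>u. p u \<le> 2 * real m \<and> norm (z - u) < \<delta>"
proof -
  obtain m x0 r where "0 < r" and ball: "ball x0 r \<subseteq> closure {x. p x \<le> real m}"
    using sublevel_closure_contains_ball by blast
  have close: "\<exists>u. p u \<le> real m \<and> norm (x - u) < \<delta>"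
    if "dist x0 x < r" and \<delta>: "0 < \<delta>" for x \<delta>
  proof -
    have "x \<in> closure {x. p x \<le> real m}"
      using ball that(1) by auto
    then obtain u where "p u \<le> real m" "dist u x < \<delta>"
      using \<delta> unfolding closure_approachable by blast
    then show ?thesis
      by (auto simp: dist_norm norm_minus_commute)
  qed
  have "\<exists>u. p u \<le> 2 * real m \<and> norm (z - u) < \<delta>" if z: "norm z < r" and \<delta>: "0 < \<delta>" for z \<delta>
  proof -
    have "dist x0 (x0 + z) < r"
      using z by (simp add: dist_norm)
    then obtain u1 where u1: "p u1 \<le> real m" "norm (x0 + z - u1) < \<delta> / 2"
      using close \<delta> half_gt_zero by blast
    obtain u2 where u2: "p u2 \<le> real m" "norm (x0 - u2) < \<delta> / 2"
      using close[of x0 "\<delta> / 2"] \<delta> \<open>0 < r\<close> by auto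
    have "z - (u1 - u2) = (x0 + z - u1) - (x0 - u2)"
      by (simp add: algebra_simps)
    then have "norm (z - (u1 - u2)) \<le> norm (x0 + z - u1) + norm (x0 - u2)"
      by (metis norm_triangle_ineq4)
    then have "norm (z - (u1 - u2)) < \<delta>"
      using u1(2) u2(2) by linarith
    moreover have "p (u1 - u2) \<le> 2 * real m"
      using diff[of u1 u2] u1(1) u2(1) by linarith
    ultimately show ?thesis by blast
  qed
  with \<open>0 < r\<close> that show ?thesis by blast
qed

lemma halving_approximation:
  obtains K where "0 \<le> K" and "\<And>z. \<exists>u. p u \<le> K * norm z \<and> norm (z - u) \<le> norm z / 2"
proof -
  obtain r m where "0 < r"
    and near: "\<And>z \<delta>. norm z < r \<Longrightarrow> 0 < \<delta> \<Longrightarrow> \<exists>u. p u \<le> 2 * real m \<and> norm (z - u) < \<delta>"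
    using approximation_near_zero by blast
  define K where "K = 4 * real m / r"
  have "\<exists>u. p u \<le> K * norm z \<and> norm (z - u) \<le> norm z / 2" for z
  proof (cases "z = 0")
    case True
    then show ?thesis
      by (intro exI[of _ 0]) simp
  next
    case False
    define t where "t = 2 * norm z / r"
    have "0 < t"
      using False \<open>0 < r\<close> by (simp add: t_def)
    have "norm ((1 / t) *\<^sub>R z) < r"
      using \<open>0 < t\<close> \<open>0 < r\<close> False by (simp add: t_def)
    then obtain u where u: "p u \<le> 2 * real m" "norm ((1 / t) *\<^sub>R z - u) < r / 4"
      using near[of "(1 / t) *\<^sub>R z" "r / 4"] \<open>0 < r\<close> by auto
    have "p (t *\<^sub>R u) \<le> K * norm z"
      using \<open>0 < t\<close> \<open>0 < r\<close> u(1) mult_left_mono[OF u(1), of t]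
      by (simp add: homogeneous K_def t_def field_simps)
    moreover have "z - t *\<^sub>R u = t *\<^sub>R ((1 / t) *\<^sub>R z - u)"
      using \<open>0 < t\<close> by (simp add: algebra_simps)
    then have "norm (z - t *\<^sub>R u) \<le> norm z / 2"
      using \<open>0 < t\<close> \<open>0 < r\<close> mult_strict_left_mono[OF u(2) \<open>0 < t\<close>] by (simp add: t_def)
    ultimately show ?thesis by blast
  qed
  moreover have "0 \<le> K"
    using \<open>0 < r\<close> by (simp add: K_def)
  ultimately show ?thesis using that by blast
qed

lemma geometric_decomposition:
  assumes "0 \<le> K" and approx: "\<And>z. \<exists>u. p u \<le> K * norm z \<and> norm (z - u) \<le> norm z / 2"
  obtains u where "u sums x" and "\<And>i. p (u i) \<le> K * ((1 / 2) ^ i * norm x)"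
proof -
  obtain next_approx where next_approx:
    "\<And>z. p (next_approx z) \<le> K * norm z \<and> norm (z - next_approx z) \<le> norm z / 2"
    using approx by metis
  define z where "z i = ((\<lambda>z. z - next_approx z) ^^ i) x" for i
  define u where "u i = next_approx (z i)" for i
  have z_0: "z 0 = x" and z_Suc: "z (Suc i) = z i - u i" for i
    by (simp_all add: z_def u_def)
  have norm_z: "norm (z i) \<le> (1 / 2) ^ i * norm x" for i
  proof (induction i)
    case (Suc i)
    then show ?case
      using next_approx[of "z i"] by (simp add: z_Suc u_def)
  qed (simp add: z_0)
  have "(\<lambda>i. (1 / 2 :: real) ^ i * norm x) \<longlonglongrightarrow> 0"
    by (intro tendsto_mult_left_zero LIMSEQ_power_zero) simp
  then have "z \<longlonglongrightarrow> 0"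
    by (rule Lim_null_comparison[OF always_eventually[OF allI[OF norm_z]]])
  then have "(\<lambda>n. x - z n) \<longlonglongrightarrow> x - 0"
    by (intro tendsto_diff tendsto_const)
  moreover have "(\<Sum>i<n. u i) = x - z n" for n
    by (induction n) (simp_all add: z_0 z_Suc)
  ultimately have "u sums x"
    unfolding sums_def by simp
  moreover have "p (u i) \<le> K * ((1 / 2) ^ i * norm x)" for i
    using next_approx[of "z i"] mult_left_mono[OF norm_z[of i] \<open>0 \<le> K\<close>] unfolding u_def by linarith
  ultimately show ?thesis using that by blast
qed

theorem bounded: "\<exists>M\<ge>0. \<forall>x. p x \<le> M * norm x"
proof -
  obtain K where "0 \<le> K" and approx: "\<And>z. \<exists>u. p u \<le> K * norm z \<and> norm (z - u) \<le> norm z / 2"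
    using halving_approximation by blast
  have "p x \<le> (2 * K) * norm x" for x
  proof -
    obtain u where "u sums x" and u: "\<And>i. p (u i) \<le> K * ((1 / 2) ^ i * norm x)"
      using geometric_decomposition[OF \<open>0 \<le> K\<close> approx] by blast
    have "(\<lambda>i. (1 / 2 :: real) ^ i) sums 2"
      using geometric_sums[of "1 / 2 :: real"] by simp
    then have geom: "(\<lambda>i. K * ((1 / 2) ^ i * norm x)) sums (K * (2 * norm x))"
      by (intro sums_mult sums_mult2)
    have "summable (\<lambda>i. p (u i))"
      using u nonneg by (intro summable_comparison_test'[OF sums_summable[OF geom]]) auto
    with \<open>u sums x\<close> have "p x \<le> (\<Sum>i. p (u i))"
      by (rule countably_subadditive)
    also have "\<dots> \<le> K * (2 * norm x)"
      unfolding sums_unique[OF geom]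
      using u \<open>summable (\<lambda>i. p (u i))\<close> sums_summable[OF geom] by (rule suminf_le)
    finally show ?thesis by simp
  qed
  with \<open>0 \<le> K\<close> show ?thesis
    by (intro exI[of _ "2 * K"]) simp
qed

end

section \<open>Coefficient functionals of a Schauder basis\<close>

locale basis_expansion =
  fixes e :: "nat \<Rightarrow> 'a::banach_lattice"
  assumes basis: "schauder_basis e"
begin

definition coeff :: "'a \<Rightarrow> nat \<Rightarrow> real" where
  "coeff x = (THE a. (\<lambda>n. \<Sum>j<n. a j *\<^sub>R e j) \<longlonglongrightarrow> x)"

definition proj :: "nat \<Rightarrow> 'a \<Rightarrow> 'a" where
  "proj n x = (\<Sum>j<n. coeff x j *\<^sub>R e j)"

definition proj_sup :: "'a \<Rightarrow> real" where
  "proj_sup x = (SUP n. norm (proj n x))"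

lemma ex1_expansion: "\<exists>!a. (\<lambda>n. \<Sum>j<n. a j *\<^sub>R e j) \<longlonglongrightarrow> x"
  using basis unfolding schauder_basis_def by blast

lemma proj_tendsto: "(\<lambda>n. proj n x) \<longlonglongrightarrow> x"
  unfolding proj_def coeff_def by (rule theI'[OF ex1_expansion])

lemma coeff_eqI: "(\<lambda>n. \<Sum>j<n. a j *\<^sub>R e j) \<longlonglongrightarrow> x \<Longrightarrow> coeff x = a"
  unfolding coeff_def by (rule the1_equality[OF ex1_expansion])

lemma coeff_add: "coeff (x + y) = (\<lambda>j. coeff x j + coeff y j)"
  by (rule coeff_eqI)
    (use tendsto_add[OF proj_tendsto[of x] proj_tendsto[of y]] in \<open>simp add: proj_def scaleR_add_left sum.distrib\<close>)

lemma coeff_scaleR: "coeff (c *\<^sub>R x) = (\<lambda>j. c * coeff x j)"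
  by (rule coeff_eqI)
    (use tendsto_scaleR[OF tendsto_const proj_tendsto[of x]] in \<open>simp add: proj_def scaleR_sum_right\<close>)

lemma linear_proj: "linear (proj n)"
  by (rule linearI)
    (simp_all add: proj_def coeff_add coeff_scaleR scaleR_add_left sum.distrib scaleR_sum_right)

lemma proj_Suc: "proj (Suc n) x = proj n x + coeff x n *\<^sub>R e n"
  by (simp add: proj_def)

lemma basis_nonzero: "e j \<noteq> 0"
proof
  assume "e j = 0"
  define a :: "nat \<Rightarrow> real" where "a = (\<lambda>_. 0) (j := 1)"
  have "(\<lambda>n. \<Sum>i<n. a i *\<^sub>R e i) = (\<lambda>n. 0)"
    using \<open>e j = 0\<close> by (intro ext sum.neutral) (auto simp: a_def)
  then have "coeff 0 = a"
    by (intro coeff_eqI) simp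
  moreover have "coeff 0 = (\<lambda>_. 0)"
    by (intro coeff_eqI) simp
  ultimately show False
    by (metis a_def fun_upd_same zero_neq_one)
qed

lemma bdd_above_norm_proj: "bdd_above (range (\<lambda>n. norm (proj n x)))"
proof -
  have "Bseq (\<lambda>n. proj n x)"
    using proj_tendsto convergent_def convergent_imp_Bseq by blast
  then show ?thesis
    unfolding Bseq_def by (auto intro: bdd_aboveI2)
qed

lemma norm_proj_le: "norm (proj n x) \<le> proj_sup x"
  unfolding proj_sup_def by (rule cSUP_upper[OF _ bdd_above_norm_proj]) simp

lemma proj_sup_le: "(\<And>n. norm (proj n x) \<le> K) \<Longrightarrow> proj_sup x \<le> K"
  unfolding proj_sup_def by (rule cSUP_least) auto

lemma norm_le_proj_sup: "norm x \<le> proj_sup x"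
  using tendsto_norm[OF proj_tendsto[of x]] by (rule LIMSEQ_le_const2) (auto intro: norm_proj_le)

lemma proj_sup_add: "proj_sup (x + y) \<le> proj_sup x + proj_sup y"
  by (rule proj_sup_le)
    (auto simp: linear_add[OF linear_proj] intro!: order_trans[OF norm_triangle_ineq] add_mono norm_proj_le)

lemma proj_sup_scaleR: "proj_sup (c *\<^sub>R x) = \<bar>c\<bar> * proj_sup x"
proof (cases "c = 0")
  case True
  then show ?thesis
    using linear_0[OF linear_proj] norm_proj_le[of 0 0]
    by (intro antisym proj_sup_le) simp_all
next
  case False
  show ?thesis
  proof (rule antisym)
    show "proj_sup (c *\<^sub>R x) \<le> \<bar>c\<bar> * proj_sup x"
      by (rule proj_sup_le) (auto simp: linear_scale[OF linear_proj] intro!: mult_left_mono norm_proj_le)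
    have "proj_sup x \<le> proj_sup (c *\<^sub>R x) / \<bar>c\<bar>"
      using False norm_proj_le[of _ "c *\<^sub>R x"]
      by (intro proj_sup_le) (simp add: linear_scale[OF linear_proj] field_simps)
    with False show "\<bar>c\<bar> * proj_sup x \<le> proj_sup (c *\<^sub>R x)"
      by (simp add: field_simps)
  qed
qed

lemma coeff_le_proj_sup: "\<bar>coeff x j\<bar> * norm (e j) \<le> 2 * proj_sup x"
proof -
  have "\<bar>coeff x j\<bar> * norm (e j) = norm (proj (Suc j) x - proj j x)"
    by (simp add: proj_Suc)
  also have "\<dots> \<le> norm (proj (Suc j) x) + norm (proj j x)"
    by (rule norm_triangle_ineq4)
  also have "\<dots> \<le> 2 * proj_sup x"
    using norm_proj_le[of "Suc j" x] norm_proj_le[of j x] by simp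
  finally show ?thesis .
qed

lemma norm_proj_diff_le: "norm (proj n x - x) \<le> 2 * proj_sup x"
  using norm_triangle_ineq4[of "proj n x" x] norm_proj_le[of n x] norm_le_proj_sup[of x] by linarith

lemma suminf_norm_proj_diff_tendsto:
  assumes "summable (\<lambda>i. proj_sup (y i))"
  shows "(\<lambda>n. \<Sum>i. norm (proj n (y i) - y i)) \<longlonglongrightarrow> 0"
proof -
  have "(\<lambda>n. \<Sum>i. norm (proj n (y i) - y i)) \<longlonglongrightarrow> (\<Sum>i. 0 :: real)"
  proof (rule tannerys_theorem[where M = "\<lambda>i. 2 * proj_sup (y i)", THEN conjunct2, THEN conjunct2])
    show "(\<lambda>n. norm (proj n (y i) - y i)) \<longlonglongrightarrow> 0" for i
      using proj_tendsto[of "y i"] by (simp add: LIM_zero_iff tendsto_norm_zero)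
    show "\<forall>\<^sub>F (i, n) in at_top \<times>\<^sub>F sequentially. norm (norm (proj n (y i) - y i)) \<le> 2 * proj_sup (y i)"
      by (intro always_eventually) (simp add: norm_proj_diff_le)
  qed (use assms in \<open>simp_all add: summable_mult\<close>)
  then show ?thesis by simp
qed

lemma proj_sums:
  assumes summable: "summable (\<lambda>i. proj_sup (y i))" and "y sums s"
  shows "(\<lambda>i. proj n (y i)) sums proj n s"
proof -
  have summable_coeff: "summable (\<lambda>i. coeff (y i) j)" for j
  proof (rule summable_comparison_test')
    show "summable (\<lambda>i. 2 * proj_sup (y i) / norm (e j))"
      using summable by (intro summable_divide summable_mult)
    show "norm (coeff (y i) j) \<le> 2 * proj_sup (y i) / norm (e j)" for i
      using coeff_le_proj_sup[of "y i" j] basis_nonzero[of j] by (simp add: field_simps)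
  qed
  define a where "a j = (\<Sum>i. coeff (y i) j)" for j
  have proj_sums_partial: "(\<lambda>i. proj n (y i)) sums (\<Sum>j<n. a j *\<^sub>R e j)" for n
    unfolding proj_def a_def by (intro sums_sum sums_scaleR_left summable_sums summable_coeff)
  have "(\<lambda>n. (\<Sum>j<n. a j *\<^sub>R e j) - s) \<longlonglongrightarrow> 0"
  proof (rule Lim_null_comparison[OF always_eventually[OF allI]])
    fix n
    have "summable (\<lambda>i. norm (proj n (y i) - y i))"
      using summable_mult[OF summable, of 2] by (rule summable_comparison_test') (simp add: norm_proj_diff_le)
    moreover have "(\<Sum>j<n. a j *\<^sub>R e j) - s = (\<Sum>i. proj n (y i) - y i)"
      using sums_diff[OF proj_sums_partial \<open>y sums s\<close>] by (simp add: sums_iff)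
    ultimately show "norm ((\<Sum>j<n. a j *\<^sub>R e j) - s) \<le> (\<Sum>i. norm (proj n (y i) - y i))"
      by (simp add: summable_norm)
  qed (rule suminf_norm_proj_diff_tendsto[OF summable])
  then have "coeff s = a"
    by (intro coeff_eqI) (simp add: LIM_zero_iff)
  then show ?thesis
    using proj_sums_partial by (simp add: proj_def)
qed

lemma proj_sup_suminf:
  assumes "u sums s" and summable: "summable (\<lambda>i. proj_sup (u i))"
  shows "proj_sup s \<le> (\<Sum>i. proj_sup (u i))"
proof (rule proj_sup_le)
  fix n
  have summable_norm_proj: "summable (\<lambda>i. norm (proj n (u i)))"
    using summable by (rule summable_comparison_test') (simp add: norm_proj_le)
  have "norm (proj n s) = norm (\<Sum>i. proj n (u i))"
    using proj_sums[OF summable \<open>u sums s\<close>] by (simp add: sums_iff)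
  also have "\<dots> \<le> (\<Sum>i. norm (proj n (u i)))"
    by (rule summable_norm[OF summable_norm_proj])
  also have "\<dots> \<le> (\<Sum>i. proj_sup (u i))"
    by (intro suminf_le summable_norm_proj summable norm_proj_le)
  finally show "norm (proj n s) \<le> (\<Sum>i. proj_sup (u i))" .
qed

text \<open>By Zabreiko's lemma \<open>proj_sup\<close> is dominated by a multiple of the norm; this is what bounds the
  coefficient functionals.\<close>

sublocale proj_sup: countably_subadditive_seminorm proj_sup
  using proj_sup_add proj_sup_scaleR proj_sup_suminf by unfold_locales

lemma coeff_bound: obtains C where "\<And>j. 0 < C j" and "\<And>j x. \<bar>coeff x j\<bar> \<le> C j * norm x"
proof -
  obtain M where "0 \<le> M" and M: "\<And>x. proj_sup x \<le> M * norm x"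
    using proj_sup.bounded by blast
  define C where "C j = 2 * (M + 1) / norm (e j)" for j
  have norm_e: "0 < norm (e j)" for j
    using basis_nonzero by simp
  have "0 < C j" for j
    using \<open>0 \<le> M\<close> norm_e[of j] by (simp add: C_def)
  moreover have "\<bar>coeff x j\<bar> \<le> C j * norm x" for x j
  proof -
    have "M * norm x \<le> (M + 1) * norm x"
      by (simp add: mult_right_mono)
    then have "\<bar>coeff x j\<bar> * norm (e j) \<le> 2 * (M + 1) * norm x"
      using coeff_le_proj_sup[of x j] M[of x] by linarith
    moreover have "C j * norm x = 2 * (M + 1) * norm x / norm (e j)"
      by (simp add: C_def)
    ultimately show ?thesis
      by (simp add: pos_le_divide_eq[OF norm_e])
  qed
  ultimately show ?thesis
    using that by blast
qed

lemma bounded_linear_coeff: "bounded_linear (\<lambda>x. coeff x j)"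
proof -
  obtain C where C: "\<And>j x. \<bar>coeff x j\<bar> \<le> C j * norm x"
    using coeff_bound by metis
  show ?thesis
  proof (rule bounded_linear_intro[where K = "C j"])
    show "norm (coeff x j) \<le> norm x * C j" for x
      using C[of x j] by (simp add: mult.commute)
  qed (simp_all add: coeff_add coeff_scaleR)
qed

end

section \<open>Neumann series\<close>

definition neumann_series :: "('a::real_normed_vector \<Rightarrow> 'a) \<Rightarrow> 'a \<Rightarrow> 'a" where
  "neumann_series T x = (\<Sum>p. (T ^^ p) x)"

context
  fixes T :: "'a::banach \<Rightarrow> 'a" and c :: real
  assumes bounded_linear_T: "bounded_linear T"
    and contraction: "\<And>x. norm (T x) \<le> c * norm x"
    and "0 \<le> c" and "c < 1"
begin

lemma norm_iterate_le: "norm ((T ^^ p) x) \<le> c ^ p * norm x"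
proof (induction p)
  case (Suc p)
  have "norm ((T ^^ Suc p) x) \<le> c * norm ((T ^^ p) x)"
    by (simp add: contraction)
  also have "\<dots> \<le> c ^ Suc p * norm x"
    using mult_left_mono[OF Suc \<open>0 \<le> c\<close>] by simp
  finally show ?case .
qed simp

lemma geometric_bound_sums: "(\<lambda>p. c ^ p * norm x) sums (norm x / (1 - c))"
  using sums_mult2[OF geometric_sums[of c], of "norm x"] \<open>0 \<le> c\<close> \<open>c < 1\<close> by simp

lemma summable_norm_iterate: "summable (\<lambda>p. norm ((T ^^ p) x))"
  by (rule summable_comparison_test'[OF sums_summable[OF geometric_bound_sums[of x]]])
    (simp add: norm_iterate_le)

lemma summable_iterate: "summable (\<lambda>p. (T ^^ p) x)"
  by (rule summable_norm_cancel[OF summable_norm_iterate])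

lemma bounded_linear_iterate: "bounded_linear (T ^^ p)"
  by (induction p) (simp_all add: bounded_linear_ident bounded_linear_compose[OF bounded_linear_T])

lemma bounded_linear_neumann_series: "bounded_linear (neumann_series T)"
proof (rule bounded_linear_intro[where K = "1 / (1 - c)"])
  show "neumann_series T (x + y) = neumann_series T x + neumann_series T y" for x y
    unfolding neumann_series_def
    by (simp add: suminf_add[OF summable_iterate summable_iterate]
        linear_add[OF bounded_linear.linear[OF bounded_linear_iterate]])
  show "neumann_series T (r *\<^sub>R x) = r *\<^sub>R neumann_series T x" for r x
    unfolding neumann_series_def
    by (simp add: suminf_scaleR_right[OF summable_iterate, symmetric]
        linear_scale[OF bounded_linear.linear[OF bounded_linear_iterate]])
  show "norm (neumann_series T x) \<le> norm x * (1 / (1 - c))" for x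
  proof -
    have "norm (neumann_series T x) \<le> (\<Sum>p. norm ((T ^^ p) x))"
      unfolding neumann_series_def by (rule summable_norm[OF summable_norm_iterate])
    also have "\<dots> \<le> norm x / (1 - c)"
      unfolding sums_unique[OF geometric_bound_sums]
      by (intro suminf_le summable_norm_iterate sums_summable[OF geometric_bound_sums] norm_iterate_le)
    finally show ?thesis by simp
  qed
qed

lemma neumann_series_inverse: "neumann_series T x - T (neumann_series T x) = x"
proof -
  have "T (neumann_series T x) = (\<Sum>p. (T ^^ Suc p) x)"
    unfolding neumann_series_def by (simp add: bounded_linear.suminf[OF bounded_linear_T summable_iterate])
  also have "\<dots> = neumann_series T x - x"
    unfolding neumann_series_def by (subst suminf_split_head[OF summable_iterate]) simp
  finally show ?thesis by simp
qed

end

definition block_start :: "(nat \<Rightarrow> nat) \<Rightarrow> nat \<Rightarrow> nat" where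
  "block_start len k = (\<Sum>i<k. len i)"

definition block_of :: "(nat \<Rightarrow> nat) \<Rightarrow> nat \<Rightarrow> nat" where
  "block_of len j = (LEAST k. j < block_start len (Suc k))"

lemma block_start_Suc: "block_start len (Suc k) = block_start len k + len k"
  by (simp add: block_start_def)

lemma block_start_mono: "k \<le> k' \<Longrightarrow> block_start len k \<le> block_start len k'"
  unfolding block_start_def by (rule sum_mono2) auto

context
  fixes len :: "nat \<Rightarrow> nat"
  assumes len_pos: "\<And>k. 0 < len k"
begin

lemma le_block_start: "k \<le> block_start len k"
proof (induction k)
  case (Suc k)
  then show ?case
    using len_pos[of k] by (simp add: block_start_Suc)
qed simp

lemma less_block_start_block_of: "j < block_start len (Suc (block_of len j))"
proof -
  have "j < block_start len (Suc j)"
    using le_block_start[of "Suc j"] by simp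
  then show ?thesis
    unfolding block_of_def by (rule LeastI)
qed

lemma block_start_block_of_le: "block_start len (block_of len j) \<le> j"
proof (cases "block_of len j")
  case (Suc k)
  then have "\<not> j < block_start len (Suc k)"
    using not_less_Least[of k "\<lambda>k. j < block_start len (Suc k)"] unfolding block_of_def by simp
  with Suc show ?thesis by simp
qed (simp add: block_start_def)

lemma le_block_of: "block_start len k \<le> j \<Longrightarrow> k \<le> block_of len j"
proof (rule ccontr)
  assume "block_start len k \<le> j" and "\<not> k \<le> block_of len j"
  then have "block_start len (Suc (block_of len j)) \<le> j"
    using block_start_mono[of "Suc (block_of len j)" k len] by simp
  with less_block_start_block_of[of j] show False by simp
qed

lemma block_of_eqI:
  assumes "block_start len k \<le> j" and "j < block_start len (Suc k)"
  shows "block_of len j = k"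
proof (rule antisym)
  show "block_of len j \<le> k"
    unfolding block_of_def by (rule Least_le) (rule assms(2))
qed (rule le_block_of[OF assms(1)])

end

lemma sum_lessThan_add: "(\<Sum>i<m + n. f i) = (\<Sum>i<m. f i) + (\<Sum>i<n. f (m + i))"
  for f :: "nat \<Rightarrow> 'b::comm_monoid_add"
  by (induction n) (simp_all add: add.assoc)

lemma sum_lessThan_mod:
  fixes f :: "nat \<Rightarrow> 'b::real_vector"
  assumes "m \<le> L"
  shows "(\<Sum>r<q * L + m. f (r mod L)) = real q *\<^sub>R (\<Sum>i<L. f i) + (\<Sum>i<m. f i)"
proof -
  have block: "(\<Sum>r<m. f ((q * L + r) mod L)) = (\<Sum>i<m. f i)" if "m \<le> L" for q m
    using that by (intro sum.cong) (auto simp: mod_add_left_eq[symmetric] less_le)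
  have "(\<Sum>r<q * L. f (r mod L)) = real q *\<^sub>R (\<Sum>i<L. f i)"
  proof (induction q)
    case (Suc q)
    have "(\<Sum>r<Suc q * L. f (r mod L)) = (\<Sum>r<q * L. f (r mod L)) + (\<Sum>i<L. f i)"
      using sum_lessThan_add[of "\<lambda>r. f (r mod L)" "q * L" L] block[of L q] by (simp add: add.commute)
    with Suc show ?case
      by (simp add: scaleR_add_left)
  qed simp
  then show ?thesis
    using sum_lessThan_add[of "\<lambda>r. f (r mod L)" "q * L" m] block[OF assms, of q] by simp
qed

section \<open>Approximating the basis from a dense span\<close>

lemma geometric_tail_sums: "(\<lambda>k. (1 / 4 :: real) ^ Suc (k + K) * c) sums ((1 / 4) ^ K / 3 * c)"
proof -
  have "(\<lambda>k. (1 / 4 :: real) ^ k * ((1 / 4) ^ Suc K * c)) sums (1 / (1 - 1 / 4) * ((1 / 4) ^ Suc K * c))"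
    by (intro sums_mult2 geometric_sums) simp
  then show ?thesis
    by (simp add: power_add mult_ac)
qed

locale perturbed_basis = basis_expansion e for e :: "nat \<Rightarrow> 'a::banach_lattice" +
  fixes C :: "nat \<Rightarrow> real" and L N :: "nat \<Rightarrow> nat"
    and a :: "nat \<Rightarrow> nat \<Rightarrow> real" and d :: "nat \<Rightarrow> nat \<Rightarrow> 'a"
  assumes coeff_le: "\<bar>coeff x k\<bar> \<le> C k * norm x"
    and L_pos: "0 < L k" and N_pos: "0 < N k"
    and approx_close: "C k * norm (e k - (\<Sum>i<L k. a k i *\<^sub>R d k i)) \<le> (1 / 4) ^ Suc k"
    and N_large: "C k * norm (\<Sum>i<L k. \<bar>a k i\<bar> *\<^sub>R labs (d k i)) \<le> real (N k) * (1 / 4) ^ k"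
begin

definition approx :: "nat \<Rightarrow> 'a" where
  "approx k = (\<Sum>i<L k. a k i *\<^sub>R d k i)"

definition majorant :: "nat \<Rightarrow> 'a" where
  "majorant k = (\<Sum>i<L k. \<bar>a k i\<bar> *\<^sub>R labs (d k i))"

lemma majorant_nonneg: "0 \<le> majorant k"
  unfolding majorant_def by (intro sum_nonneg scaleR_nonneg_nonneg labs_nonneg abs_ge_zero)

lemma labs_partial_approx_le: "m \<le> L k \<Longrightarrow> labs (\<Sum>i<m. a k i *\<^sub>R d k i) \<le> majorant k"
proof -
  assume "m \<le> L k"
  have "labs (\<Sum>i<m. a k i *\<^sub>R d k i) \<le> (\<Sum>i<m. \<bar>a k i\<bar> *\<^sub>R labs (d k i))"
    using labs_sum[of "\<lambda>i. a k i *\<^sub>R d k i" "{..<m}"] by (simp add: labs_scaleR)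
  also have "\<dots> \<le> majorant k"
    unfolding majorant_def using \<open>m \<le> L k\<close>
    by (intro sum_mono2 scaleR_nonneg_nonneg labs_nonneg abs_ge_zero) auto
  finally show ?thesis .
qed

lemma norm_perturbation_term_le: "norm (coeff y k *\<^sub>R (e k - approx k)) \<le> (1 / 4) ^ Suc k * norm y"
proof -
  have "norm (coeff y k *\<^sub>R (e k - approx k)) \<le> C k * norm y * norm (e k - approx k)"
    by (simp add: coeff_le mult_right_mono)
  also have "\<dots> = C k * norm (e k - approx k) * norm y"
    by (simp add: ac_simps)
  also have "\<dots> \<le> (1 / 4) ^ Suc k * norm y"
    using approx_close[folded approx_def] by (rule mult_right_mono) simp
  finally show ?thesis .
qed

lemma summable_norm_perturbation_terms: "summable (\<lambda>k. norm (coeff y k *\<^sub>R (e k - approx k)))"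
proof (rule summable_comparison_test'[OF sums_summable[OF geometric_tail_sums[of 0 "norm y"]]])
  show "norm (norm (coeff y k *\<^sub>R (e k - approx k))) \<le> (1 / 4) ^ Suc (k + 0) * norm y" for k
    using norm_perturbation_term_le[of y k] by simp
qed

definition perturbation :: "'a \<Rightarrow> 'a" where
  "perturbation y = (\<Sum>k. coeff y k *\<^sub>R (e k - approx k))"

definition perturbation_tail :: "'a \<Rightarrow> nat \<Rightarrow> 'a" where
  "perturbation_tail y K = (\<Sum>k. coeff y (k + K) *\<^sub>R (e (k + K) - approx (k + K)))"

lemma perturbation_split:
  "perturbation y = perturbation_tail y K + (\<Sum>k<K. coeff y k *\<^sub>R (e k - approx k))"
  unfolding perturbation_def perturbation_tail_def
  by (rule suminf_split_initial_segment[OF summable_norm_cancel[OF summable_norm_perturbation_terms]])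

lemma norm_perturbation_tail_le: "norm (perturbation_tail y K) \<le> (1 / 4) ^ K / 3 * norm y"
proof -
  have summable_tail: "summable (\<lambda>k. norm (coeff y (k + K) *\<^sub>R (e (k + K) - approx (k + K))))"
    using summable_norm_perturbation_terms by (rule summable_ignore_initial_segment)
  have "norm (perturbation_tail y K) \<le> (\<Sum>k. norm (coeff y (k + K) *\<^sub>R (e (k + K) - approx (k + K))))"
    unfolding perturbation_tail_def by (rule summable_norm[OF summable_tail])
  also have "\<dots> \<le> (1 / 4) ^ K / 3 * norm y"
    unfolding sums_unique[OF geometric_tail_sums]
    by (intro suminf_le summable_tail sums_summable[OF geometric_tail_sums] norm_perturbation_term_le)
  finally show ?thesis .
qed

lemma norm_perturbation_le: "norm (perturbation y) \<le> 1 / 3 * norm y"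
  using norm_perturbation_tail_le[of y 0] perturbation_split[of y 0] by simp

lemma perturbation_sums: "(\<lambda>k. coeff y k *\<^sub>R (e k - approx k)) sums perturbation y"
  unfolding perturbation_def
  by (rule summable_sums[OF summable_norm_cancel[OF summable_norm_perturbation_terms]])

lemma bounded_linear_perturbation: "bounded_linear perturbation"
proof (rule bounded_linear_intro[where K = "1 / 3"])
  show "perturbation (x + y) = perturbation x + perturbation y" for x y
    using sums_add[OF perturbation_sums[of x] perturbation_sums[of y]] perturbation_sums[of "x + y"]
    by (simp add: coeff_add scaleR_add_left sums_unique2)
  show "perturbation (r *\<^sub>R x) = r *\<^sub>R perturbation x" for r x
    using sums_scaleR_right[OF perturbation_sums[of x], of r] perturbation_sums[of "r *\<^sub>R x"]
    by (simp add: coeff_scaleR sums_unique2)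
  show "norm (perturbation x) \<le> norm x * (1 / 3)" for x
    using norm_perturbation_le[of x] by simp
qed

text \<open>Block \<open>k\<close> of the frame has length \<open>N k * L k\<close>; it runs \<open>N k\<close> times through \<open>d k 0, \<dots>, d k (L k - 1)\<close>,
  with coefficients \<open>a k i / N k\<close> times the \<open>k\<close>-th coefficient of \<open>neumann_series perturbation x\<close>.\<close>

abbreviation frame_start :: "nat \<Rightarrow> nat" where
  "frame_start \<equiv> block_start (\<lambda>k. N k * L k)"

abbreviation frame_block :: "nat \<Rightarrow> nat" where
  "frame_block \<equiv> block_of (\<lambda>k. N k * L k)"

lemma frame_len_pos: "0 < N k * L k"
  using N_pos L_pos by simp

lemma frame_start_block_le: "frame_start (frame_block n) \<le> n"
  by (rule block_start_block_of_le) (rule frame_len_pos)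

lemma less_frame_start_Suc_block: "n < frame_start (Suc (frame_block n))"
  by (rule less_block_start_block_of) (rule frame_len_pos)

lemma le_frame_block: "frame_start K \<le> n \<Longrightarrow> K \<le> frame_block n"
  by (rule le_block_of) (rule frame_len_pos)

definition frame_index :: "nat \<Rightarrow> nat" where
  "frame_index j = (j - frame_start (frame_block j)) mod L (frame_block j)"

definition frame_vector :: "nat \<Rightarrow> 'a" where
  "frame_vector j = d (frame_block j) (frame_index j)"

definition frame_weight :: "nat \<Rightarrow> real" where
  "frame_weight j = a (frame_block j) (frame_index j) / real (N (frame_block j))"

definition frame_sum :: "'a \<Rightarrow> nat \<Rightarrow> 'a" where
  "frame_sum y n = (\<Sum>j<n. (frame_weight j * coeff y (frame_block j)) *\<^sub>R frame_vector j)"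

lemma frame_term_in_block:
  assumes "r < N K * L K"
  shows "(frame_weight (frame_start K + r) * coeff y (frame_block (frame_start K + r)))
      *\<^sub>R frame_vector (frame_start K + r) = (coeff y K / N K) *\<^sub>R (a K (r mod L K) *\<^sub>R d K (r mod L K))"
proof -
  have "frame_block (frame_start K + r) = K"
    using assms by (intro block_of_eqI frame_len_pos) (simp_all add: block_start_Suc)
  then show ?thesis
    by (simp add: frame_weight_def frame_vector_def frame_index_def)
qed

lemma frame_sum_shift:
  assumes "r \<le> N K * L K"
  shows "frame_sum y (frame_start K + r)
    = frame_sum y (frame_start K) + (coeff y K / N K) *\<^sub>R (\<Sum>i<r. a K (i mod L K) *\<^sub>R d K (i mod L K))"
  unfolding frame_sum_def sum_lessThan_add scaleR_sum_right
  using assms by (intro arg_cong2[where f = "(+)"] refl sum.cong) (simp_all add: frame_term_in_block)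

lemma frame_sum_block_start: "frame_sum y (frame_start K) = (\<Sum>k<K. coeff y k *\<^sub>R approx k)"
proof (induction K)
  case 0
  then show ?case
    by (simp add: frame_sum_def block_start_def)
next
  case (Suc K)
  have "(\<Sum>i<N K * L K. a K (i mod L K) *\<^sub>R d K (i mod L K)) = real (N K) *\<^sub>R approx K"
    using sum_lessThan_mod[of 0 "L K" "\<lambda>i. a K i *\<^sub>R d K i" "N K"] by (simp add: approx_def)
  then have "frame_sum y (frame_start (Suc K)) = frame_sum y (frame_start K) + coeff y K *\<^sub>R approx K"
    using frame_sum_shift[of "N K * L K" K y] N_pos[of K] by (simp add: block_start_Suc)
  with Suc show ?case
    by simp
qed

lemma frame_sum_within_block:
  assumes "q < N K" and "m \<le> L K"
  shows "frame_sum y (frame_start K + (q * L K + m)) = (\<Sum>k<K. coeff y k *\<^sub>R approx k)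
    + (coeff y K * q / N K) *\<^sub>R approx K + (coeff y K / N K) *\<^sub>R (\<Sum>i<m. a K i *\<^sub>R d K i)"
proof -
  have "q * L K + m \<le> N K * L K"
    using mult_le_mono1[of "Suc q" "N K" "L K"] assms by simp
  then show ?thesis
    using frame_sum_shift[of "q * L K + m" K y] sum_lessThan_mod[OF assms(2), of "\<lambda>i. a K i *\<^sub>R d K i" q]
    by (simp add: frame_sum_block_start approx_def scaleR_add_right)
qed

definition remainder :: "'a \<Rightarrow> nat \<Rightarrow> 'a" where
  "remainder y K = labs (perturbation_tail y K) + labs (coeff y K *\<^sub>R (e K - approx K))
    + (\<bar>coeff y K\<bar> / N K) *\<^sub>R majorant K"

lemma remainder_nonneg: "0 \<le> remainder y K"
  unfolding remainder_def
  by (intro add_nonneg_nonneg labs_nonneg scaleR_nonneg_nonneg majorant_nonneg) simp_all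

lemma norm_majorant_term_le: "norm ((\<bar>coeff y K\<bar> / N K) *\<^sub>R majorant K) \<le> (1 / 4) ^ K * norm y"
proof -
  have "norm ((\<bar>coeff y K\<bar> / N K) *\<^sub>R majorant K) = \<bar>coeff y K\<bar> * norm (majorant K) / N K"
    by simp
  also have "\<dots> \<le> C K * norm (majorant K) * norm y / N K"
  proof (rule divide_right_mono)
    show "\<bar>coeff y K\<bar> * norm (majorant K) \<le> C K * norm (majorant K) * norm y"
      using mult_right_mono[OF coeff_le[of y K] norm_ge_zero[of "majorant K"]] by (simp only: ac_simps)
  qed simp
  also have "\<dots> \<le> real (N K) * (1 / 4) ^ K * norm y / N K"
    using N_large[of K, folded majorant_def] by (intro divide_right_mono mult_right_mono) simp_all
  also have "\<dots> = (1 / 4) ^ K * norm y"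
    using N_pos[of K] by simp
  finally show ?thesis .
qed

lemma norm_remainder_le: "norm (remainder y K) \<le> 3 * norm y * (1 / 4) ^ K"
proof -
  have "0 \<le> (1 / 4 :: real) ^ K * norm y"
    by simp
  then have "norm (perturbation_tail y K) \<le> (1 / 4) ^ K * norm y"
    using norm_perturbation_tail_le[of y K] by linarith
  moreover have "norm (coeff y K *\<^sub>R (e K - approx K)) \<le> (1 / 4) ^ K * norm y"
  proof -
    have "norm (coeff y K *\<^sub>R (e K - approx K)) \<le> (1 / 4) ^ Suc K * norm y"
      by (rule norm_perturbation_term_le)
    also have "\<dots> \<le> (1 / 4) ^ K * norm y"
      by (intro mult_right_mono power_decreasing) simp_all
    finally show ?thesis .
  qed
  moreover note norm_majorant_term_le[of y K]
  moreover have "norm (remainder y K) \<le> norm (perturbation_tail y K) + norm (coeff y K *\<^sub>R (e K - approx K))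
      + norm ((\<bar>coeff y K\<bar> / N K) *\<^sub>R majorant K)"
    using order_trans[OF norm_triangle_ineq add_right_mono[OF norm_triangle_ineq],
        of "labs (perturbation_tail y K)" "labs (coeff y K *\<^sub>R (e K - approx K))"
        "(\<bar>coeff y K\<bar> / N K) *\<^sub>R majorant K"]
    unfolding remainder_def by simp
  ultimately have "norm (remainder y K) \<le> 3 * ((1 / 4) ^ K * norm y)"
    by linarith
  then show ?thesis
    by (simp add: mult_ac)
qed

lemma frame_position:
  obtains q m where "q < N (frame_block n)" and "m \<le> L (frame_block n)"
    and "n = frame_start (frame_block n) + (q * L (frame_block n) + m)"
proof -
  define K where "K = frame_block n"
  define r where "r = n - frame_start K"
  have "frame_start K \<le> n" and "n < frame_start K + N K * L K"
    using frame_start_block_le[of n] less_frame_start_Suc_block[of n]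
    unfolding K_def block_start_Suc by simp_all
  then have "n = frame_start K + r" and "r < N K * L K"
    unfolding r_def by linarith+
  moreover have "r = r div L K * L K + r mod L K"
    by simp
  moreover have "r div L K < N K" and "r mod L K \<le> L K"
    using \<open>r < N K * L K\<close> L_pos[of K] by (simp_all add: less_mult_imp_div_less less_imp_le)
  ultimately show ?thesis
    using that unfolding K_def by metis
qed

text \<open>After \<open>q\<close> complete passes through block \<open>K\<close>, the frame sum has added the fraction \<open>q / N K\<close> of
  \<open>coeff y K *\<^sub>R approx K\<close>, i.e. of the difference of two consecutive tails of the basis expansion.\<close>

lemma frame_sum_error_eq:
  assumes "q < N K" and "m \<le> L K"
  shows "y - perturbation y - frame_sum y (frame_start K + (q * L K + m))
    = (y - proj K y) - perturbation_tail y K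
      - (real q / N K) *\<^sub>R ((y - proj K y) - (y - proj (Suc K) y) - coeff y K *\<^sub>R (e K - approx K))
      - (coeff y K / N K) *\<^sub>R (\<Sum>i<m. a K i *\<^sub>R d K i)"
proof -
  have approx_K: "coeff y K *\<^sub>R approx K
      = (y - proj K y) - (y - proj (Suc K) y) - coeff y K *\<^sub>R (e K - approx K)"
    by (simp add: proj_Suc scaleR_diff_right)
  have partial: "(\<Sum>k<K. coeff y k *\<^sub>R approx k) = proj K y - (\<Sum>k<K. coeff y k *\<^sub>R (e k - approx k))"
    by (simp add: proj_def scaleR_diff_right sum_subtractf)
  have "frame_sum y (frame_start K + (q * L K + m)) = (\<Sum>k<K. coeff y k *\<^sub>R approx k)
      + (real q / N K) *\<^sub>R (coeff y K *\<^sub>R approx K) + (coeff y K / N K) *\<^sub>R (\<Sum>i<m. a K i *\<^sub>R d K i)"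
    unfolding frame_sum_within_block[OF assms] by (simp add: mult_ac)
  then show ?thesis
    unfolding perturbation_split[of y K] partial approx_K[symmetric] by (simp add: algebra_simps)
qed

lemma labs_frame_sum_error_le:
  fixes y :: 'a and n :: nat
  defines "K \<equiv> frame_block n"
  shows "labs (y - perturbation y - frame_sum y n)
    \<le> 2 *\<^sub>R labs (y - proj K y) + labs (y - proj (Suc K) y) + remainder y K"
proof -
  obtain q m where "q < N K" and "m \<le> L K" and n: "n = frame_start K + (q * L K + m)"
    using frame_position[of n] unfolding K_def by blast
  have "\<bar>real q / N K\<bar> \<le> 1"
    using \<open>q < N K\<close> by simp
  have "labs ((coeff y K / N K) *\<^sub>R (\<Sum>i<m. a K i *\<^sub>R d K i)) \<le> (\<bar>coeff y K\<bar> / N K) *\<^sub>R majorant K"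
    unfolding labs_scaleR using labs_partial_approx_le[OF \<open>m \<le> L K\<close>]
    by (simp add: scaleR_left_mono)
  then show ?thesis
    unfolding n frame_sum_error_eq[OF \<open>q < N K\<close> \<open>m \<le> L K\<close>] remainder_def
    by (intro order_trans[OF labs_combination_le[OF \<open>\<bar>real q / N K\<bar> \<le> 1\<close>]] add_mono order_refl)
qed

lemma labs_frame_sum_error_eventually_le:
  assumes tails: "\<And>n. N0 \<le> n \<Longrightarrow> labs (y - proj n y) \<le> \<epsilon> *\<^sub>R w"
    and remainders: "\<And>K. remainder y K \<le> (1 / 2) ^ K *\<^sub>R w'" and "0 \<le> w'"
    and "(1 / 2) ^ K0 < \<epsilon>" and "frame_start (max N0 K0) \<le> n"
  shows "labs (y - perturbation y - frame_sum y n) \<le> \<epsilon> *\<^sub>R (3 *\<^sub>R w + w')"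
proof -
  define K where "K = frame_block n"
  have "max N0 K0 \<le> K"
    unfolding K_def by (rule le_frame_block) fact
  then have "(1 / 2 :: real) ^ K \<le> (1 / 2) ^ K0"
    by (intro power_decreasing) simp_all
  with \<open>(1 / 2) ^ K0 < \<epsilon>\<close> have "(1 / 2 :: real) ^ K \<le> \<epsilon>"
    by linarith
  then have "remainder y K \<le> \<epsilon> *\<^sub>R w'"
    by (rule order_trans[OF remainders scaleR_right_mono[OF _ \<open>0 \<le> w'\<close>]])
  have "labs (y - perturbation y - frame_sum y n)
      \<le> 2 *\<^sub>R labs (y - proj K y) + labs (y - proj (Suc K) y) + remainder y K"
    unfolding K_def by (rule labs_frame_sum_error_le)
  also have "\<dots> \<le> 2 *\<^sub>R (\<epsilon> *\<^sub>R w) + \<epsilon> *\<^sub>R w + \<epsilon> *\<^sub>R w'"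
    using \<open>max N0 K0 \<le> K\<close> \<open>remainder y K \<le> \<epsilon> *\<^sub>R w'\<close>
    by (intro add_mono scaleR_left_mono tails) simp_all
  also have "\<dots> = \<epsilon> *\<^sub>R (3 *\<^sub>R w + w')"
    by (simp add: algebra_simps flip: scaleR_add_left)
  finally show ?thesis .
qed

lemma frame_sum_u_conv:
  assumes "u_conv (\<lambda>n. proj n y) y"
  shows "u_conv (frame_sum y) (y - perturbation y)"
proof -
  obtain w where "0 \<le> w" and w: "\<And>\<epsilon>. 0 < \<epsilon> \<Longrightarrow> \<exists>N. \<forall>n\<ge>N. labs (y - proj n y) \<le> \<epsilon> *\<^sub>R w"
    using assms unfolding u_conv_def by blast
  obtain w' where "0 \<le> w'" and w': "\<And>K. remainder y K \<le> (1 / 2) ^ K *\<^sub>R w'"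
    using nonneg_le_geometric_regulator[OF remainder_nonneg norm_remainder_le] by blast
  have "\<exists>M. \<forall>n\<ge>M. labs (y - perturbation y - frame_sum y n) \<le> \<epsilon> *\<^sub>R (3 *\<^sub>R w + w')"
    if "0 < \<epsilon>" for \<epsilon>
  proof -
    obtain N0 where "\<And>n. N0 \<le> n \<Longrightarrow> labs (y - proj n y) \<le> \<epsilon> *\<^sub>R w"
      using w[OF \<open>0 < \<epsilon>\<close>] by blast
    moreover obtain K0 where "(1 / 2 :: real) ^ K0 < \<epsilon>"
      using real_arch_pow_inv[OF \<open>0 < \<epsilon>\<close>, of "1 / 2"] by auto
    ultimately show ?thesis
      using labs_frame_sum_error_eventually_le[OF _ w' \<open>0 \<le> w'\<close>] by blast
  qed
  moreover have "0 \<le> 3 *\<^sub>R w + w'"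
    using \<open>0 \<le> w\<close> \<open>0 \<le> w'\<close> by (intro add_nonneg_nonneg scaleR_nonneg_nonneg) simp_all
  ultimately show ?thesis
    unfolding u_conv_def by blast
qed

lemma u_frame:
  assumes "\<And>y. u_conv (\<lambda>n. proj n y) y"
  shows "u_frame frame_vector (\<lambda>j x. frame_weight j * coeff (neumann_series perturbation x) (frame_block j))"
proof -
  let ?S = "neumann_series perturbation"
  have "u_conv (frame_sum (?S x)) x" for x
    using frame_sum_u_conv[OF assms, of "?S x"]
      neumann_series_inverse[OF bounded_linear_perturbation norm_perturbation_le, of x]
    by simp
  moreover have "bounded_linear ?S"
    using bounded_linear_neumann_series[OF bounded_linear_perturbation norm_perturbation_le] by simp
  then have "bounded_linear (\<lambda>x. frame_weight j * coeff (?S x) (frame_block j))" for j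
    by (rule bounded_linear_compose[OF bounded_linear_mult_right bounded_linear_compose[OF bounded_linear_coeff]])
  ultimately show ?thesis
    unfolding u_frame_def schauder_frame_def frame_sum_def by (auto intro: u_conv_imp_LIMSEQ)
qed

end

lemma span_as_nat_indexed_sum:
  fixes D :: "'a::real_vector set"
  assumes "v \<in> span D" and "D \<noteq> {}"
  shows "\<exists>L a d. 0 < (L :: nat) \<and> (\<forall>i. d i \<in> D) \<and> v = (\<Sum>i<L. a i *\<^sub>R d i)"
proof -
  obtain T u where "finite T" "T \<subseteq> D" and v: "v = (\<Sum>x\<in>T. u x *\<^sub>R x)"
    using assms(1) unfolding span_explicit by blast
  obtain h where h: "bij_betw h {..<card T} T"
    using ex_bij_betw_nat_finite[OF \<open>finite T\<close>] by (auto simp: atLeast0LessThan)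
  obtain d0 where "d0 \<in> D"
    using assms(2) by blast
  define d where "d i = (if i < card T then h i else d0)" for i
  define a where "a i = (if i < card T then u (h i) else 0)" for i
  have "(\<Sum>i<card T + 1. a i *\<^sub>R d i) = (\<Sum>i<card T. u (h i) *\<^sub>R h i)"
    by (simp add: a_def d_def)
  also have "\<dots> = v"
    unfolding v by (rule sum.reindex_bij_betw[OF h])
  finally have "v = (\<Sum>i<card T + 1. a i *\<^sub>R d i)" ..
  moreover have "\<forall>i. d i \<in> D"
    using h \<open>T \<subseteq> D\<close> \<open>d0 \<in> D\<close> unfolding d_def bij_betw_def by auto
  ultimately show ?thesis
    by (intro exI[of _ "card T + 1"] exI[of _ a] exI[of _ d]) simp
qed

lemma dense_span_approximation:
  fixes D :: "'a::real_normed_vector set"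
  assumes "closure (span D) = UNIV" and "D \<noteq> {}" and "0 < \<delta>"
  shows "\<exists>L a d. 0 < (L :: nat) \<and> (\<forall>i. d i \<in> D) \<and> norm (x - (\<Sum>i<L. a i *\<^sub>R d i)) < \<delta>"
proof -
  obtain v where "v \<in> span D" and "dist v x < \<delta>"
    using assms(1,3) closure_approachable[of x "span D"] by auto
  moreover obtain L a d where "0 < (L :: nat) \<and> (\<forall>i. d i \<in> D) \<and> v = (\<Sum>i<L. a i *\<^sub>R d i)"
    using span_as_nat_indexed_sum[OF \<open>v \<in> span D\<close> assms(2)] by blast
  ultimately show ?thesis
    by (intro exI[of _ L] exI[of _ a] exI[of _ d]) (auto simp: dist_norm norm_minus_commute)
qed

context basis_expansion
begin

lemma dense_span_nonempty:
  fixes D :: "'a set"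
  assumes "closure (span D) = UNIV"
  shows "D \<noteq> {}"
proof
  assume "D = {}"
  then have "closure (span D) = {0}"
    by simp
  with assms basis_nonzero[of 0] show False
    by (metis UNIV_I singletonD)
qed

lemma exists_perturbed_basis:
  assumes dense: "closure (span D) = UNIV"
  obtains C L N a d where "perturbed_basis e C L N a d" and "\<And>k i. d k i \<in> D"
proof -
  obtain C where C_pos: "\<And>k. 0 < C k" and coeff_le: "\<And>k x. \<bar>coeff x k\<bar> \<le> C k * norm x"
    using coeff_bound by metis
  have "\<forall>k. \<exists>L a d. 0 < (L :: nat) \<and> (\<forall>i. d i \<in> D)
      \<and> norm (e k - (\<Sum>i<L. a i *\<^sub>R d i)) < (1 / 4) ^ Suc k / C k"
    using dense_span_approximation[OF dense dense_span_nonempty[OF dense]] C_pos by simp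
  then obtain L a d where approximations: "\<forall>k. 0 < (L k :: nat) \<and> (\<forall>i. d k i \<in> D)
      \<and> norm (e k - (\<Sum>i<L k. a k i *\<^sub>R d k i)) < (1 / 4) ^ Suc k / C k"
    unfolding choice_iff by blast
  define N where "N k = nat \<lceil>C k * norm (\<Sum>i<L k. \<bar>a k i\<bar> *\<^sub>R labs (d k i)) * 4 ^ k\<rceil> + 1" for k
  have "perturbed_basis e C L N a d"
  proof
    show "C k * norm (e k - (\<Sum>i<L k. a k i *\<^sub>R d k i)) \<le> (1 / 4) ^ Suc k" for k
    proof -
      have "norm (e k - (\<Sum>i<L k. a k i *\<^sub>R d k i)) < (1 / 4) ^ Suc k / C k"
        using approximations by blast
      with C_pos[of k] show ?thesis
        by (simp add: field_simps)
    qed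
    have "C k * norm (\<Sum>i<L k. \<bar>a k i\<bar> *\<^sub>R labs (d k i)) * 4 ^ k \<le> real (N k)" for k
      unfolding N_def by linarith
    then show "C k * norm (\<Sum>i<L k. \<bar>a k i\<bar> *\<^sub>R labs (d k i)) \<le> real (N k) * (1 / 4) ^ k" for k
      by (simp add: power_one_over field_simps)
  qed (use coeff_le approximations in \<open>simp_all add: N_def\<close>)
  with approximations show ?thesis
    using that by blast
qed

end

theorem theorem4p4:
  fixes D :: "'a::banach_lattice set"
  assumes "\<exists>e::nat \<Rightarrow> 'a. bibasis e"
    and "closure (span D) = UNIV"
  shows "\<exists>xs f. u_frame xs f \<and> (\<forall>j. xs j \<in> D)"
proof -
  obtain e :: "nat \<Rightarrow> 'a" where "bibasis e"
    using assms(1) by blast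
  then interpret basis_expansion e
    by unfold_locales (simp add: bibasis_def)
  have proj_u_conv: "u_conv (\<lambda>n. proj n y) y" for y
    using \<open>bibasis e\<close> proj_tendsto[of y] unfolding bibasis_def proj_def by blast
  obtain C L N a d where "perturbed_basis e C L N a d" and d: "\<And>k i. d k i \<in> D"
    using exists_perturbed_basis[OF assms(2)] by blast
  then interpret perturbed_basis e C L N a d
    by simp
  show ?thesis
    using u_frame[OF proj_u_conv] d unfolding frame_vector_def by blast
qed

end
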